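(* Let $c>0$ be an integer, $P$ an admissible Hilbert polynomial, and $\Lambda$ a finite composition of the operators $\lambda$ and $\sigma$. Then the number of expandable minimal monomial generators of the lexicographic ideal $L^{\Lambda(P)}_{c+\deg\Lambda(P)}$ is greater than or equal to the number of expandable minimal monomial generators of $L^P_{c+\deg P}$.
   Context: $\Bbbk$ is an algebraically closed field. Binomial coefficients are polynomials: $\binom{t+a}{b}=\frac{(t+a)\cdots(t+a-b+1)}{b!}$ for $b\ge0$, $0$ for $b<0$. An admissible Hilbert polynomial (Hilbert polynomial of a nonempty closed subscheme of a projective space) has a unique Gotzmann expression $P(t)=\sum_{j=1}^r\binom{t+b_j-(j-1)}{b_j}$ with $b_1\ge\dots\ge b_r\ge0$; $\sigma(P):=1+P$ and $\lambda(P):=\sum_{j=1}^r\binom{t+b_j+1-(j-1)}{b_j+1}$. Lexicographic order: $x^u>x^v$ if the first nonzero coordinate of $u-v$ is positive. For admissible $Q$ and $n>\deg Q$, the lexicographic ideal $L^Q_n\subset\Bbbk[x_0,\dots,x_n]$ is the saturation with respect to $\langle x_0,\dots,x_n\rangle$ of the monomial ideal whose degree-$i$ piece is spanned by the $\dim_\Bbbk I_i$ lex-largest degree-$i$ monomials, for any homogeneous $I$ with Hilbert polynomial $Q$. For a monomial $g$, $\max g$ is the largest $j$ with $x_j\mid g$. A minimal monomial generator $g$ of a saturated Borel monomial ideal $I\subseteq\Bbbk[x_0,\dots,x_n]$ is expandable if the set $\{gx_{i+1}/x_i: x_i\mid g,\ 0\le i<n-1\}$ contains no minimal monomial generator of $I$.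 *)

theory Defs
  imports "HOL-Computational_Algebra.Polynomial"
begin

text \<open>Binomial coefficient as a polynomial in t: binom(t+a, b) = (t+a)...(t+a-b+1)/b!.\<close>
definition binp :: "int \<Rightarrow> nat \<Rightarrow> real poly" where
  "binp a b = smult (1 / fact b) (\<Prod>i<b. [: of_int a - of_nat i, 1 :])"

text \<open>Gotzmann polynomial of a list b_1,...,b_r (0-based index k = j-1).\<close>
definition gotz :: "nat list \<Rightarrow> real poly" where
  "gotz bs = (\<Sum>k<length bs. binp (int (bs ! k) - int k) (bs ! k))"

definition gotzmann_expr :: "real poly \<Rightarrow> nat list \<Rightarrow> bool" where
  "gotzmann_expr P bs \<longleftrightarrow> bs \<noteq> [] \<and> sorted_wrt (\<ge>) bs \<and> P = gotz bs"

definition admissible :: "real poly \<Rightarrow> bool" where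
  "admissible P \<longleftrightarrow> (\<exists>bs. gotzmann_expr P bs)"

definition sigma_op :: "real poly \<Rightarrow> real poly" where
  "sigma_op P = 1 + P"

definition lambda_op :: "real poly \<Rightarrow> real poly" where
  "lambda_op P = gotz (map Suc (THE bs. gotzmann_expr P bs))"

datatype hop = Lam | Sig

fun apply_ops :: "hop list \<Rightarrow> real poly \<Rightarrow> real poly" where
  "apply_ops [] P = P"
| "apply_ops (Lam # os) P = lambda_op (apply_ops os P)"
| "apply_ops (Sig # os) P = sigma_op (apply_ops os P)"

definition mons :: "nat \<Rightarrow> (nat \<Rightarrow> nat) set" where
  "mons n = {u. \<forall>j>n. u j = 0}"

definition mdeg :: "nat \<Rightarrow> (nat \<Rightarrow> nat) \<Rightarrow> nat" where
  "mdeg n u = (\<Sum>j\<le>n. u j)"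

definition lex_gt :: "(nat \<Rightarrow> nat) \<Rightarrow> (nat \<Rightarrow> nat) \<Rightarrow> bool" where
  "lex_gt u v \<longleftrightarrow> (\<exists>k. v k < u k \<and> (\<forall>j<k. u j = v j))"

text \<open>m (of degree i) lies among the dim I_i = binom(n+i,n) - Q(i) lex-largest
  monomials of degree i (for i large, where the Hilbert function equals Q).\<close>
definition in_lex_segment :: "real poly \<Rightarrow> nat \<Rightarrow> (nat \<Rightarrow> nat) \<Rightarrow> bool" where
  "in_lex_segment Q n m \<longleftrightarrow>
     real (card {v \<in> mons n. mdeg n v = mdeg n m \<and> lex_gt v m})
       < real ((n + mdeg n m) choose n) - poly Q (real (mdeg n m))"

text \<open>The lexicographic ideal L^Q_n: saturation of the lex-segment ideal with
  Hilbert polynomial Q. A monomial m is in the saturation iff m*w lies in the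
  ideal for all monomials w of sufficiently large degree; the saturation only
  depends on the ideal in large degrees, where its degree-i part is the lex
  segment of size binom(n+i,n) - Q(i).\<close>
definition lex_ideal :: "real poly \<Rightarrow> nat \<Rightarrow> (nat \<Rightarrow> nat) set" where
  "lex_ideal Q n = {m \<in> mons n. \<exists>d. \<forall>w \<in> mons n. d \<le> mdeg n (\<lambda>j. m j + w j) \<longrightarrow>
       in_lex_segment Q n (\<lambda>j. m j + w j)}"

definition mdvd :: "(nat \<Rightarrow> nat) \<Rightarrow> (nat \<Rightarrow> nat) \<Rightarrow> bool" where
  "mdvd u v \<longleftrightarrow> (\<forall>j. u j \<le> v j)"

definition min_gens :: "(nat \<Rightarrow> nat) set \<Rightarrow> (nat \<Rightarrow> nat) set" where
  "min_gens I = {g \<in> I. \<forall>h \<in> I. mdvd h g \<longrightarrow> h = g}"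

text \<open>g * x_{i+1} / x_i\<close>
definition shift_mon :: "(nat \<Rightarrow> nat) \<Rightarrow> nat \<Rightarrow> (nat \<Rightarrow> nat)" where
  "shift_mon g i = (g(i := g i - 1))(Suc i := g (Suc i) + 1)"

definition expandable :: "nat \<Rightarrow> (nat \<Rightarrow> nat) set \<Rightarrow> (nat \<Rightarrow> nat) \<Rightarrow> bool" where
  "expandable n I g \<longleftrightarrow> g \<in> min_gens I \<and>
     (\<forall>i. i + 1 < n \<and> 0 < g i \<longrightarrow> shift_mon g i \<notin> min_gens I)"

definition num_expandable :: "nat \<Rightarrow> (nat \<Rightarrow> nat) set \<Rightarrow> nat" where
  "num_expandable n I = card {g. expandable n I g}"

end

theory Submission
  imports Defs "HOL-Library.Multiset"
begin

text \<open>
Let b_1 \<ge> \<dots> \<ge> b_r be the Gotzmann expression of P and n = c + deg P = c + b_1 > b_1.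
In every degree D \<ge> r the monomials lexicographically smaller than
p = x_{n-1-b_1} \<cdots> x_{n-1-b_r} are counted by P(D), one binomial summand per factor of p;
hence L^P_n consists of the monomials that are lexicographically at least p. If x_T is the last
variable dividing p, the minimal generators of L^P_n are p and the monomials
x_0^{p_0} \<cdots> x_{s-1}^{p_{s-1}} x_s^{p_s + 1} with s < T.

The operator \<lambda> raises every b_j and n by one, so p is unchanged, and a generator is expandable
in the new ideal iff it was in the old one: moving an exponent into the new last variable never
produces a generator. The operator \<sigma> appends b_{r+1} = 0, i.e. multiplies p by x_{n-1}; the new
p is expandable, and every other expandable generator remains an expandable generator.
\<close>

lemma lex_gt_trans: assumes "lex_gt a b" "lex_gt b c" shows "lex_gt a c"
proof -
  obtain k where k: "b k < a k" "\<forall>j<k. a j = b j" using assms(1) lex_gt_def by auto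
  obtain l where l: "c l < b l" "\<forall>j<l. b j = c j" using assms(2) lex_gt_def by auto
  show ?thesis
    unfolding lex_gt_def using k l
    by (cases k l rule: linorder_cases) (auto intro!: exI[of _ "min k l"] simp: min_def)
qed

lemma lex_gt_irrefl [simp]: "\<not> lex_gt a a"
  by (simp add: lex_gt_def)

lemma lex_gt_asym: "lex_gt a b \<Longrightarrow> \<not> lex_gt b a"
  using lex_gt_trans lex_gt_irrefl by blast

lemma lex_gt_total: assumes "a \<noteq> b" shows "lex_gt a b \<or> lex_gt b a"
proof -
  have ex: "\<exists>k. a k \<noteq> b k" using assms by auto
  define m where "m = (LEAST k. a k \<noteq> b k)"
  have "a m \<noteq> b m" unfolding m_def using LeastI_ex[OF ex] .
  moreover have "\<forall>j<m. a j = b j" unfolding m_def using not_less_Least by blast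
  ultimately show ?thesis
    unfolding lex_gt_def by (cases "a m < b m") (auto intro: exI[of _ m])
qed

lemma lex_gt_if_mdvd: assumes "mdvd a b" shows "a = b \<or> lex_gt b a"
proof -
  have "\<not> lex_gt a b" using assms unfolding lex_gt_def mdvd_def by (auto simp: not_less)
  then show ?thesis using lex_gt_total by blast
qed

lemma lex_gt_fun_upd_Suc:
  assumes "\<forall>j>t. p j = 0"
  shows "lex_gt (p(t := Suc (p t))) u \<longleftrightarrow> lex_gt p u \<or> (\<forall>j\<le>t. u j = p j)"
proof
  assume "lex_gt (p(t := Suc (p t))) u"
  then obtain k where k: "u k < (p(t := Suc (p t))) k" "\<forall>j<k. (p(t := Suc (p t))) j = u j"
    unfolding lex_gt_def by blast
  consider "k < t" | "k = t" "u t < p t" | "k = t" "u t = p t" | "t < k"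
    using k by (cases k t rule: linorder_cases) (auto simp: less_Suc_eq)
  then show "lex_gt p u \<or> (\<forall>j\<le>t. u j = p j)"
  proof cases
    case 3 then show ?thesis using k by (auto simp: le_less)
  next
    case 4 then show ?thesis using k assms by auto
  qed (use k in \<open>auto simp: lex_gt_def intro: exI[of _ k]\<close>)
next
  assume "lex_gt p u \<or> (\<forall>j\<le>t. u j = p j)"
  then show "lex_gt (p(t := Suc (p t))) u"
  proof
    assume "lex_gt p u"
    then obtain k where k: "u k < p k" "\<forall>j<k. p j = u j" unfolding lex_gt_def by blast
    have "k \<le> t" using k(1) assms by (metis less_nat_zero_code not_le)
    then show ?thesis using k unfolding lex_gt_def by (intro exI[of _ k]) auto
  qed (auto simp: lex_gt_def intro: exI[of _ t])
qed

section \<open>Counting monomials\<close>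

lemma mons_le_if_pos: "u \<in> mons n \<Longrightarrow> 0 < u j \<Longrightarrow> j \<le> n"
  by (rule ccontr) (simp add: mons_def)

lemma mdeg_add: "mdeg n (\<lambda>j. m j + w j) = mdeg n m + mdeg n w"
  by (simp add: mdeg_def sum.distrib)

lemma mdeg_split:
  assumes "t < n"
  shows "mdeg n u = sum u {..t} + mdeg (n - Suc t) (\<lambda>j. u (j + Suc t))"
proof -
  have "{..n} = {..t} \<union> {Suc t..n}" using assms by auto
  then have "sum u {..n} = sum u {..t} + sum u {Suc t..n}"
    by (simp add: sum.union_disjoint ivl_disj_int)
  also have "sum u {Suc t..n} = sum (\<lambda>j. u (j + Suc t)) {0..n - Suc t}"
    using sum.shift_bounds_cl_nat_ivl[of u 0 "Suc t" "n - Suc t"] assms by simp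
  finally show ?thesis unfolding mdeg_def by (simp add: atLeast0AtMost)
qed

lemma card_mons_deg: "card {u \<in> mons n. mdeg n u = D} = (n + D) choose n"
proof -
  let ?L = "{l::nat list. size l = Suc n \<and> sum_list l = D}"
  have sum_list_map: "sum_list (map u [0..<Suc n]) = mdeg n u" for u
    unfolding mdeg_def
    by (simp add: sum_list_distinct_conv_sum_set atLeast0LessThan lessThan_Suc_atMost[symmetric]
        del: upt_Suc)
  have "bij_betw (\<lambda>u. map u [0..<Suc n]) {u \<in> mons n. mdeg n u = D} ?L"
  proof (rule bij_betwI')
    fix x y assume x: "x \<in> {u \<in> mons n. mdeg n u = D}" and y: "y \<in> {u \<in> mons n. mdeg n u = D}"
    show "(map x [0..<Suc n] = map y [0..<Suc n]) = (x = y)"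
    proof
      assume "map x [0..<Suc n] = map y [0..<Suc n]"
      then have "x j = y j" for j using x y by (cases "j \<le> n") (auto simp: mons_def)
      then show "x = y" ..
    qed simp
  next
    fix x assume "x \<in> {u \<in> mons n. mdeg n u = D}"
    then show "map x [0..<Suc n] \<in> ?L" using sum_list_map by simp
  next
    fix l assume l: "l \<in> ?L"
    define u where "u = (\<lambda>j. if j \<le> n then l ! j else 0)"
    have mu: "map u [0..<Suc n] = l"
      using l by (intro nth_equalityI) (auto simp: u_def simp del: upt_Suc)
    have "u \<in> {u \<in> mons n. mdeg n u = D}"
      using mu l sum_list_map[of u] by (auto simp: mons_def u_def)
    then show "\<exists>x\<in>{u \<in> mons n. mdeg n u = D}. l = map x [0..<Suc n]" using mu by metis
  qed
  then have "card {u \<in> mons n. mdeg n u = D} = card ?L" by (rule bij_betw_same_card)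
  also have "\<dots> = (D + n) choose D" using card_length_sum_list[of "Suc n" D] by simp
  also have "\<dots> = (n + D) choose n" using binomial_symmetric[of D "D + n"] by (simp add: add.commute)
  finally show ?thesis .
qed

lemma finite_mons_deg: "finite {u \<in> mons n. mdeg n u = D}"
  by (rule card_ge_0_finite) (simp add: card_mons_deg)

lemma card_mons_deg_prefix:
  assumes tn: "t < n" and SD: "sum p {..t} \<le> D"
  shows "card {u \<in> mons n. mdeg n u = D \<and> (\<forall>j\<le>t. u j = p j)}
       = (D - sum p {..t} + (n - Suc t)) choose (n - Suc t)"
proof -
  let ?S = "sum p {..t}"
  let ?k = "n - Suc t"
  let ?A = "{u \<in> mons n. mdeg n u = D \<and> (\<forall>j\<le>t. u j = p j)}"
  have prefix_sum: "(\<forall>j\<le>t. u j = p j) \<Longrightarrow> sum u {..t} = ?S" for u by simp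
  have "bij_betw (\<lambda>u j. u (j + Suc t)) ?A {w \<in> mons ?k. mdeg ?k w = D - ?S}"
  proof (rule bij_betwI')
    fix x y assume x: "x \<in> ?A" and y: "y \<in> ?A"
    show "((\<lambda>j. x (j + Suc t)) = (\<lambda>j. y (j + Suc t))) = (x = y)"
    proof
      assume eq: "(\<lambda>j. x (j + Suc t)) = (\<lambda>j. y (j + Suc t))"
      show "x = y"
      proof
        fix j
        show "x j = y j"
        proof (cases "j \<le> t")
          case False
          then have "j = (j - Suc t) + Suc t" by simp
          then show ?thesis using fun_cong[OF eq, of "j - Suc t"] by metis
        qed (use x y in auto)
      qed
    qed simp
  next
    fix x assume "x \<in> ?A"
    then show "(\<lambda>j. x (j + Suc t)) \<in> {w \<in> mons ?k. mdeg ?k w = D - ?S}"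
      using mdeg_split[OF tn, of x] prefix_sum[of x] by (auto simp: mons_def)
  next
    fix w assume w: "w \<in> {w \<in> mons ?k. mdeg ?k w = D - ?S}"
    define u where "u = (\<lambda>j. if j \<le> t then p j else w (j - Suc t))"
    have shift: "(\<lambda>j. u (j + Suc t)) = w" by (auto simp: u_def)
    have "u \<in> mons n" using w tn by (auto simp: mons_def u_def)
    moreover have "\<forall>j\<le>t. u j = p j" by (simp add: u_def)
    moreover have "mdeg n u = D"
      using mdeg_split[OF tn, of u] shift w prefix_sum[of u] SD by (simp add: u_def)
    ultimately show "\<exists>x\<in>?A. w = (\<lambda>j. x (j + Suc t))" using shift by auto
  qed
  then have "card ?A = card {w \<in> mons ?k. mdeg ?k w = D - ?S}" by (rule bij_betw_same_card)
  also have "\<dots> = (?k + (D - ?S)) choose ?k" by (rule card_mons_deg)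
  finally show ?thesis by (simp add: add.commute)
qed

section \<open>The lexicographic ideal of a Gotzmann polynomial\<close>

lemma sorted_wrt_ge_hd: "sorted_wrt (\<ge>) xs \<Longrightarrow> x \<in> set xs \<Longrightarrow> x \<le> hd (xs :: 'a :: linorder list)"
  by (cases xs) auto

lemma sorted_wrt_ge_last: "sorted_wrt (\<ge>) xs \<Longrightarrow> x \<in> set xs \<Longrightarrow> last xs \<le> (x :: 'a :: linorder)"
  by (induction xs) (auto dest: last_in_set)

definition gotz_mon :: "nat \<Rightarrow> nat list \<Rightarrow> nat \<Rightarrow> nat" where
  "gotz_mon n bs j = length (filter (\<lambda>b. n - Suc b = j) bs)"

lemma gotz_mon_Nil [simp]: "gotz_mon n [] = (\<lambda>_. 0)"
  by (simp add: gotz_mon_def fun_eq_iff)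

lemma gotz_mon_Cons: "gotz_mon n (b # bs) j = (if n - Suc b = j then 1 else 0) + gotz_mon n bs j"
  by (auto simp: gotz_mon_def)

lemma gotz_mon_snoc:
  "gotz_mon n (bs @ [b]) = (gotz_mon n bs)(n - Suc b := Suc (gotz_mon n bs (n - Suc b)))"
  by (auto simp: gotz_mon_def)

lemma gotz_mon_map_Suc: "gotz_mon (Suc n) (map Suc bs) = gotz_mon n bs"
  by (rule ext) (simp add: gotz_mon_def filter_map o_def)

lemma gotz_mon_pos_iff: "0 < gotz_mon n bs j \<longleftrightarrow> (\<exists>b\<in>set bs. j = n - Suc b)"
  by (auto simp: gotz_mon_def filter_empty_conv)

lemma gotz_mon_eq_0:
  assumes "\<forall>b\<in>set bs. t \<le> b" "n - Suc t < j"
  shows "gotz_mon n bs j = 0"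
  using assms gotz_mon_pos_iff[of n bs j] by fastforce

lemma gotz_mon_mons: "gotz_mon n bs \<in> mons n"
  by (auto simp: mons_def gotz_mon_def filter_empty_conv)

lemma sum_gotz_mon: "\<forall>b\<in>set bs. n - Suc b \<le> t \<Longrightarrow> sum (gotz_mon n bs) {..t} = length bs"
proof (induction bs)
  case (Cons b bs)
  have "sum (gotz_mon n (b # bs)) {..t}
      = sum (\<lambda>j. if n - Suc b = j then 1 else 0) {..t} + sum (gotz_mon n bs) {..t}"
    unfolding gotz_mon_Cons by (simp add: sum.distrib)
  also have "sum (\<lambda>j. if n - Suc b = j then (1::nat) else 0) {..t} = 1"
    using Cons.prems by (simp add: sum.delta)
  finally show ?case using Cons by simp
qed simp

lemma count_mset_gotz_mon: "count (mset (map (\<lambda>b. n - Suc b) bs)) j = gotz_mon n bs j"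
  by (induction bs) (auto simp: gotz_mon_Cons)

lemma gotz_snoc: "gotz (bs @ [b]) = gotz bs + binp (int b - int (length bs)) b"
  unfolding gotz_def by (simp add: nth_append)

lemma poly_binp:
  assumes "r \<le> D"
  shows "poly (binp (int b - int r) b) (real D) = real ((D - r + b) choose b)"
proof -
  have "real ((D - r + b) choose b) = real (D - r + b) gchoose b" by (rule binomial_gbinomial)
  also have "\<dots> = (\<Prod>i=0..<b. real (D - r + b) - real i) / fact b" by (rule gbinomial_prod_rev)
  also have "\<dots> = (\<Prod>i<b. real_of_int (int b - int r) - real i + real D) / fact b"
    using assms by (simp add: atLeast0LessThan of_nat_diff algebra_simps)
  finally show ?thesis unfolding binp_def by (simp add: poly_prod)
qed

lemma card_lex_below_gotz_mon:
  assumes "sorted_wrt (\<ge>) bs" "\<forall>b\<in>set bs. b < n" "length bs \<le> D"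
  shows "real (card {u \<in> mons n. mdeg n u = D \<and> lex_gt (gotz_mon n bs) u}) = poly (gotz bs) (real D)"
  using assms
proof (induction bs rule: rev_induct)
  case Nil then show ?case by (simp add: lex_gt_def gotz_def)
next
  case (snoc b bs)
  let ?p = "gotz_mon n bs"
  let ?t = "n - Suc b"
  have ge: "\<forall>x\<in>set bs. b \<le> x" and bn: "b < n" using snoc.prems(1,2) by (auto simp: sorted_wrt_append)
  have IH: "real (card {u \<in> mons n. mdeg n u = D \<and> lex_gt ?p u}) = poly (gotz bs) (real D)"
    using snoc by (simp add: sorted_wrt_append)
  have supp: "\<forall>j>?t. ?p j = 0" using gotz_mon_eq_0[OF ge] by blast
  have sum_p: "sum ?p {..?t} = length bs" using ge by (intro sum_gotz_mon) auto
  let ?A = "{u \<in> mons n. mdeg n u = D \<and> lex_gt ?p u}"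
  let ?B = "{u \<in> mons n. mdeg n u = D \<and> (\<forall>j\<le>?t. u j = ?p j)}"
  have split: "{u \<in> mons n. mdeg n u = D \<and> lex_gt (gotz_mon n (bs @ [b])) u} = ?A \<union> ?B"
    unfolding gotz_mon_snoc lex_gt_fun_upd_Suc[OF supp] by blast
  have disjoint: "?A \<inter> ?B = {}"
  proof (rule ccontr)
    assume "?A \<inter> ?B \<noteq> {}"
    then obtain u where u: "lex_gt ?p u" "\<forall>j\<le>?t. u j = ?p j" by blast
    then obtain k where k: "u k < ?p k" unfolding lex_gt_def by blast
    have "k \<le> ?t" using k supp by (metis less_nat_zero_code not_le)
    then show False using u(2) k by auto
  qed
  have "finite ?A" "finite ?B" by (auto intro: finite_subset[OF _ finite_mons_deg[of n D]])
  moreover have "card ?B = (D - length bs + b) choose b"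
    using card_mons_deg_prefix[of ?t n ?p D] bn sum_p snoc.prems(3) by (simp add: Suc_diff_Suc)
  ultimately have "real (card {u \<in> mons n. mdeg n u = D \<and> lex_gt (gotz_mon n (bs @ [b])) u})
      = real (card ?A) + real ((D - length bs + b) choose b)"
    unfolding split using card_Un_disjoint[OF _ _ disjoint] by simp
  also have "\<dots> = poly (gotz (bs @ [b])) (real D)"
    unfolding IH gotz_snoc using poly_binp[of "length bs" D b] snoc.prems(3) by simp
  finally show ?case .
qed

definition lex_upset :: "nat \<Rightarrow> (nat \<Rightarrow> nat) \<Rightarrow> (nat \<Rightarrow> nat) set" where
  "lex_upset n p = {m \<in> mons n. \<not> lex_gt p m}"

lemma in_lex_segment_gotz_iff:
  assumes sorted: "sorted_wrt (\<ge>) bs" and bn: "\<forall>b\<in>set bs. b < n" and u: "u \<in> mons n"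
    and len: "length bs \<le> mdeg n u"
  shows "in_lex_segment (gotz bs) n u \<longleftrightarrow> \<not> lex_gt (gotz_mon n bs) u"
proof -
  define D where "D = mdeg n u"
  define p where "p = gotz_mon n bs"
  let ?All = "{v \<in> mons n. mdeg n v = D}"
  let ?Below = "{v \<in> mons n. mdeg n v = D \<and> lex_gt p v}"
  let ?Above_u = "{v \<in> mons n. mdeg n v = D \<and> lex_gt v u}"
  have fin: "finite ?All" by (rule finite_mons_deg)
  have sub: "?Below \<subseteq> ?All" by blast
  have "real (card (?All - ?Below)) = real (card ?All) - real (card ?Below)"
    using card_Diff_subset[OF finite_subset[OF sub fin] sub] card_mono[OF fin sub]
    by (simp add: of_nat_diff)
  also have "\<dots> = real ((n + D) choose n) - poly (gotz bs) (real D)"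
    unfolding p_def card_mons_deg card_lex_below_gotz_mon[OF sorted bn len[folded D_def]] ..
  finally have card_complement:
    "real (card (?All - ?Below)) = real ((n + D) choose n) - poly (gotz bs) (real D)" .
  have seg: "in_lex_segment (gotz bs) n u \<longleftrightarrow> card ?Above_u < card (?All - ?Below)"
    unfolding in_lex_segment_def D_def[symmetric] card_complement[symmetric] of_nat_less_iff ..
  show ?thesis
  proof (cases "lex_gt p u")
    case False
    have "?Above_u \<subseteq> ?All - ?Below" using False lex_gt_trans by blast
    moreover have "u \<in> (?All - ?Below) - ?Above_u" using u False D_def by simp
    ultimately have "?Above_u \<subset> ?All - ?Below" by blast
    then have "card ?Above_u < card (?All - ?Below)" by (rule psubset_card_mono[rotated]) (use fin in blast)
    then show ?thesis using seg False p_def by simp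
  next
    case True
    have "?All - ?Below \<subseteq> ?Above_u"
    proof
      fix v assume v: "v \<in> ?All - ?Below"
      then have "v \<noteq> u" "\<not> lex_gt u v" using True lex_gt_trans by blast+
      then show "v \<in> ?Above_u" using v lex_gt_total by blast
    qed
    then have "card (?All - ?Below) \<le> card ?Above_u"
      by (rule card_mono[rotated]) (rule finite_subset[OF _ fin], blast)
    then show ?thesis using seg True p_def by simp
  qed
qed

lemma lex_ideal_gotz_subset_lex_upset:
  assumes sorted: "sorted_wrt (\<ge>) bs" and bn: "\<forall>b\<in>set bs. b < n"
  shows "lex_ideal (gotz bs) n \<subseteq> lex_upset n (gotz_mon n bs)"
proof
  let ?p = "gotz_mon n bs"
  fix m assume m: "m \<in> lex_ideal (gotz bs) n"
  then have m_mons: "m \<in> mons n" unfolding lex_ideal_def by blast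
  obtain d where d: "\<forall>w \<in> mons n. d \<le> mdeg n (\<lambda>j. m j + w j) \<longrightarrow>
     in_lex_segment (gotz bs) n (\<lambda>j. m j + w j)" using m unfolding lex_ideal_def by blast
  have "\<not> lex_gt ?p m"
  proof
    assume "lex_gt ?p m"
    then obtain k where k: "m k < ?p k" "\<forall>j<k. ?p j = m j" unfolding lex_gt_def by blast
    have kn: "k < n" using k(1) gotz_mon_pos_iff[of n bs k] bn by fastforce
    \<comment> \<open>multiply by a high power of the last variable \<open>x\<^sub>n\<close>, which does not change the comparison\<close>
    define w where "w = (\<lambda>j. if j = n then d + length bs else 0)"
    have w: "w \<in> mons n" "mdeg n w = d + length bs" by (simp_all add: w_def mons_def mdeg_def)
    have mw: "(\<lambda>j. m j + w j) \<in> mons n" using w m_mons by (simp add: mons_def)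
    have "in_lex_segment (gotz bs) n (\<lambda>j. m j + w j)" using d w mdeg_add[of n m w] by simp
    then have "\<not> lex_gt ?p (\<lambda>j. m j + w j)"
      using in_lex_segment_gotz_iff[OF sorted bn mw] mdeg_add[of n m w] w by simp
    moreover have "lex_gt ?p (\<lambda>j. m j + w j)"
      unfolding lex_gt_def using k kn by (intro exI[of _ k]) (auto simp: w_def)
    ultimately show False by blast
  qed
  then show "m \<in> lex_upset n ?p" using m_mons by (simp add: lex_upset_def)
qed

lemma lex_upset_subset_lex_ideal_gotz:
  assumes sorted: "sorted_wrt (\<ge>) bs" and bn: "\<forall>b\<in>set bs. b < n"
  shows "lex_upset n (gotz_mon n bs) \<subseteq> lex_ideal (gotz bs) n"
proof
  let ?p = "gotz_mon n bs"
  fix m assume m: "m \<in> lex_upset n ?p"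
  then have m_mons: "m \<in> mons n" and not_below: "\<not> lex_gt ?p m" by (auto simp: lex_upset_def)
  have "in_lex_segment (gotz bs) n (\<lambda>j. m j + w j)"
    if w: "w \<in> mons n" and len: "length bs \<le> mdeg n (\<lambda>j. m j + w j)" for w
  proof -
    have mw: "(\<lambda>j. m j + w j) \<in> mons n" using w m_mons by (simp add: mons_def)
    have "m = (\<lambda>j. m j + w j) \<or> lex_gt (\<lambda>j. m j + w j) m"
      by (rule lex_gt_if_mdvd) (simp add: mdvd_def)
    then have "\<not> lex_gt ?p (\<lambda>j. m j + w j)" using not_below lex_gt_trans by metis
    then show ?thesis using in_lex_segment_gotz_iff[OF sorted bn mw len] by simp
  qed
  then show "m \<in> lex_ideal (gotz bs) n" using m_mons unfolding lex_ideal_def by blast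
qed

theorem lex_ideal_gotz:
  assumes "sorted_wrt (\<ge>) bs" and "\<forall>b\<in>set bs. b < n"
  shows "lex_ideal (gotz bs) n = lex_upset n (gotz_mon n bs)"
  using lex_ideal_gotz_subset_lex_upset[OF assms] lex_upset_subset_lex_ideal_gotz[OF assms] by blast

section \<open>Minimal and expandable generators of lexicographic upsets\<close>

definition lex_gen :: "(nat \<Rightarrow> nat) \<Rightarrow> nat \<Rightarrow> nat \<Rightarrow> nat" where
  "lex_gen p s = (\<lambda>j. if j < s then p j else if j = s then Suc (p s) else 0)"

lemma lex_gen_fun_upd: "s < k \<Longrightarrow> lex_gen (p(k := x)) s = lex_gen p s"
  by (auto simp: lex_gen_def)

lemma lex_gt_lex_gen: "lex_gt (lex_gen p s) p"
  unfolding lex_gt_def by (intro exI[of _ s]) (auto simp: lex_gen_def)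

lemma shift_mon_apply:
  "shift_mon g i j = (if j = Suc i then Suc (g (Suc i)) else if j = i then g i - 1 else g j)"
  by (simp add: shift_mon_def)

lemma lex_upset_iff: "h \<in> lex_upset n p \<longleftrightarrow> h \<in> mons n \<and> (h = p \<or> lex_gt h p)"
  using lex_gt_total lex_gt_asym by (auto simp: lex_upset_def)

lemma lex_gen_mem_lex_upset: "p \<in> mons n \<Longrightarrow> s \<le> n \<Longrightarrow> lex_gen p s \<in> lex_upset n p"
  using lex_gt_lex_gen by (auto simp: lex_upset_iff mons_def lex_gen_def)

lemma min_gens_lex_upset_subset:
  assumes p: "p \<in> mons n" and p0: "\<forall>j>T. p j = 0"
  shows "min_gens (lex_upset n p) \<subseteq> insert p (lex_gen p ` {..<T})"
proof
  fix g assume "g \<in> min_gens (lex_upset n p)"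
  then have g: "g \<in> lex_upset n p" and g_min: "\<forall>h \<in> lex_upset n p. mdvd h g \<longrightarrow> h = g"
    by (auto simp: min_gens_def)
  show "g \<in> insert p (lex_gen p ` {..<T})"
  proof (cases "g = p")
    case False
    then obtain k where k: "p k < g k" "\<forall>j<k. g j = p j"
      using g by (auto simp: lex_upset_iff lex_gt_def)
    show ?thesis
    proof (cases "k < T")
      case True
      have "k \<le> n" using g k(1) by (intro mons_le_if_pos[of g]) (auto simp: lex_upset_iff)
      then have "lex_gen p k \<in> lex_upset n p" using p by (rule lex_gen_mem_lex_upset[rotated])
      moreover have "mdvd (lex_gen p k) g" using k by (auto simp: mdvd_def lex_gen_def)
      ultimately show ?thesis using g_min True by force
    next
      case False
      have "p j \<le> g j" for j using k p0 False by (cases j k rule: linorder_cases) auto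
      then have "mdvd p g" by (simp add: mdvd_def)
      then show ?thesis using g_min p by (auto simp: lex_upset_iff)
    qed
  qed simp
qed

lemma mem_min_gens_lex_upset_self: "p \<in> mons n \<Longrightarrow> p \<in> min_gens (lex_upset n p)"
  using lex_gt_if_mdvd lex_gt_asym by (fastforce simp: min_gens_def lex_upset_iff)

lemma lex_gen_mem_min_gens_lex_upset:
  assumes p: "p \<in> mons n" and "s < T" and pT: "0 < p T"
  shows "lex_gen p s \<in> min_gens (lex_upset n p)"
proof -
  have "T \<le> n" using p pT by (rule mons_le_if_pos)
  then have gen: "lex_gen p s \<in> lex_upset n p" using p \<open>s < T\<close> by (intro lex_gen_mem_lex_upset) auto
  \<comment> \<open>a monomial \<open>h\<close> lex-greater than \<open>p\<close> and dividing \<open>lex_gen p s\<close> first exceeds \<open>p\<close> at \<open>s\<close>\<close>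
  have "h = lex_gen p s" if h: "h \<in> lex_upset n p" and h_dvd: "mdvd h (lex_gen p s)" for h
  proof -
    have h_le: "h j \<le> lex_gen p s j" for j using h_dvd by (simp add: mdvd_def)
    have "lex_gen p s T = 0" using \<open>s < T\<close> by (simp add: lex_gen_def)
    then have "h \<noteq> p" using h_le[of T] pT by auto
    then obtain k where k: "p k < h k" "\<forall>j<k. h j = p j"
      using h by (auto simp: lex_upset_iff lex_gt_def)
    have "k = s" using h_le[of k] k(1) by (cases k s rule: linorder_cases) (auto simp: lex_gen_def)
    have "h j = lex_gen p s j" for j
      using h_le[of j] k \<open>k = s\<close> by (cases j s rule: linorder_cases) (auto simp: lex_gen_def)
    then show ?thesis by blast
  qed
  then show ?thesis using gen unfolding min_gens_def by blast
qed

lemma min_gens_lex_upset: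
  assumes Tn: "T < n" and pT: "0 < p T" and p0: "\<forall>j>T. p j = 0"
  shows "min_gens (lex_upset n p) = insert p (lex_gen p ` {..<T})"
proof -
  have p: "p \<in> mons n" using Tn p0 by (auto simp: mons_def)
  show ?thesis
    using min_gens_lex_upset_subset[OF p p0] mem_min_gens_lex_upset_self[OF p]
      lex_gen_mem_min_gens_lex_upset[OF p _ pT] by blast
qed

lemma expandable_lex_upset_Suc:
  assumes Tn: "T < n" and pT: "0 < p T" and p0: "\<forall>j>T. p j = 0"
  shows "expandable (Suc n) (lex_upset (Suc n) p) g \<longleftrightarrow> expandable n (lex_upset n p) g"
proof -
  let ?M = "insert p (lex_gen p ` {..<T})"
  have M: "min_gens (lex_upset n p) = ?M" "min_gens (lex_upset (Suc n) p) = ?M"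
    using min_gens_lex_upset[OF Tn pT p0] min_gens_lex_upset[of T "Suc n" p] Tn pT p0 by auto
  have "h n = 0" if "h \<in> ?M" for h using that Tn p0 by (auto simp: lex_gen_def)
  moreover have "shift_mon g i n \<noteq> 0" if "Suc i = n" for i using that by (simp add: shift_mon_apply)
  ultimately have "shift_mon g i \<notin> ?M" if "Suc i = n" for i using that by blast
  then show ?thesis unfolding expandable_def M by (auto simp: less_Suc_eq)
qed

lemma expandable_lex_upset_self:
  assumes pT: "0 < p T" and p0: "\<forall>j>T. p j = 0"
  shows "expandable (Suc T) (lex_upset (Suc T) p) p"
proof -
  have M: "min_gens (lex_upset (Suc T) p) = insert p (lex_gen p ` {..<T})"
    using min_gens_lex_upset[of T "Suc T" p] assms by simp
  have "shift_mon p i \<notin> insert p (lex_gen p ` {..<T})" if "i < T" "0 < p i" for i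
  proof -
    have "shift_mon p i i \<noteq> p i" using that by (simp add: shift_mon_apply)
    moreover have "shift_mon p i T \<noteq> 0" using that pT by (simp add: shift_mon_apply)
    moreover have "lex_gen p s T = 0" if "s < T" for s using that by (simp add: lex_gen_def)
    ultimately show ?thesis by auto
  qed
  then show ?thesis unfolding expandable_def M by auto
qed

lemma shift_lex_gen_support:
  assumes "s < T" "i \<le> s"
  shows "shift_mon (lex_gen p s) i T \<le> 1" and "\<forall>j>T. shift_mon (lex_gen p s) i j = 0"
  using assms by (auto simp: shift_mon_apply lex_gen_def)

lemma min_gens_lex_upset_mult_last:
  assumes Tn: "T < n" and pT: "0 < p T" and p0: "\<forall>j>T. p j = 0"
    and h: "h \<in> min_gens (lex_upset n (p(n - 1 := Suc (p (n - 1)))))"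
    and hT: "h T \<le> 1" and h0: "\<forall>j>T. h j = 0"
  shows "h \<in> min_gens (lex_upset n p)"
proof -
  let ?p' = "p(n - 1 := Suc (p (n - 1)))"
  have "min_gens (lex_upset n ?p') = insert ?p' (lex_gen ?p' ` {..<n - 1})"
    using Tn p0 by (intro min_gens_lex_upset) auto
  then consider "h = ?p'" | s where "s < n - 1" "h = lex_gen p s"
    using h lex_gen_fun_upd by auto
  then show ?thesis
  proof cases
    case 1
    have "T < n - 1 \<or> T = n - 1" using Tn by linarith
    then show ?thesis using 1 h0[rule_format, of "n - 1"] hT pT by auto
  next
    case (2 s)
    consider "s < T" | "s = T" | "T < s" by linarith
    then show ?thesis
    proof cases
      case 1 then show ?thesis using 2 min_gens_lex_upset[OF Tn pT p0] by auto
    next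
      case 3 then show ?thesis using 2 h0 by (auto simp: lex_gen_def)
    qed (use 2 hT pT in \<open>auto simp: lex_gen_def\<close>)
  qed
qed

lemma expandable_lex_gen_mult_last:
  assumes Tn: "T < n" and pT: "0 < p T" and p0: "\<forall>j>T. p j = 0" and s: "s < T"
    and expandable: "expandable n (lex_upset n p) (lex_gen p s)"
  shows "expandable n (lex_upset n (p(n - 1 := Suc (p (n - 1))))) (lex_gen p s)"
proof -
  let ?p' = "p(n - 1 := Suc (p (n - 1)))"
  have "min_gens (lex_upset n ?p') = insert ?p' (lex_gen ?p' ` {..<n - 1})"
    using Tn p0 by (intro min_gens_lex_upset) auto
  moreover have "lex_gen ?p' s = lex_gen p s" using s Tn by (intro lex_gen_fun_upd) simp
  moreover have "s \<in> {..<n - 1}" using s Tn by simp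
  ultimately have gen: "lex_gen p s \<in> min_gens (lex_upset n ?p')" by (metis image_eqI insertI2)
  have "shift_mon (lex_gen p s) i \<notin> min_gens (lex_upset n ?p')"
    if i: "i + 1 < n" "0 < lex_gen p s i" for i
  proof
    assume "shift_mon (lex_gen p s) i \<in> min_gens (lex_upset n ?p')"
    moreover have "i \<le> s" using i(2) by (rule contrapos_pp) (simp add: lex_gen_def)
    ultimately have "shift_mon (lex_gen p s) i \<in> min_gens (lex_upset n p)"
      using min_gens_lex_upset_mult_last[OF Tn pT p0] shift_lex_gen_support[OF s] by blast
    then show False using expandable i unfolding expandable_def by blast
  qed
  then show ?thesis using gen unfolding expandable_def by blast
qed

lemma card_expandable_mult_last:
  assumes Tn: "T < n" and pT: "0 < p T" and p0: "\<forall>j>T. p j = 0"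
  shows "card {g. expandable n (lex_upset n p) g}
       \<le> card {g. expandable n (lex_upset n (p(n - 1 := Suc (p (n - 1))))) g}"
proof -
  let ?p' = "p(n - 1 := Suc (p (n - 1)))"
  let ?E = "{g. expandable n (lex_upset n p) g}"
  let ?E' = "{g. expandable n (lex_upset n ?p') g}"
  have p'0: "\<forall>j>n - 1. ?p' j = 0" using Tn p0 by auto
  have "min_gens (lex_upset n ?p') = insert ?p' (lex_gen ?p' ` {..<n - 1})"
    using p'0 Tn by (intro min_gens_lex_upset) auto
  then have "finite (min_gens (lex_upset n ?p'))" by simp
  then have fin: "finite ?E'" by (rule finite_subset[rotated]) (auto simp: expandable_def)
  have rest: "?E - {p} \<subseteq> lex_gen p ` {..<T}"
    using min_gens_lex_upset[OF assms] unfolding expandable_def by blast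
  have new: "?p' \<notin> ?E - {p}"
  proof
    assume "?p' \<in> ?E - {p}"
    then obtain s where "s < T" "?p' = lex_gen p s" using rest by blast
    moreover have "lex_gen p s (n - 1) = 0" using \<open>s < T\<close> Tn by (auto simp: lex_gen_def)
    ultimately show False by (metis fun_upd_same nat.distinct(1))
  qed
  have p'_expandable: "expandable n (lex_upset n ?p') ?p'"
    using expandable_lex_upset_self[of ?p' "n - 1"] p'0 Tn by simp
  have sub: "insert ?p' (?E - {p}) \<subseteq> ?E'"
  proof
    fix g assume "g \<in> insert ?p' (?E - {p})"
    then consider "g = ?p'" | s where "s < T" "g = lex_gen p s" "expandable n (lex_upset n p) g"
      using rest by blast
    then show "g \<in> ?E'" using p'_expandable expandable_lex_gen_mult_last[OF assms] by cases auto
  qed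
  have "finite (?E - {p})" using finite_subset[OF sub fin] by simp
  then have "Suc (card (?E - {p})) = card (insert ?p' (?E - {p}))" using new by simp
  also have "\<dots> \<le> card ?E'" using sub fin by (rule card_mono[rotated])
  finally show ?thesis by (cases "p \<in> ?E") (simp_all add: card_Diff_singleton)
qed

section \<open>Gotzmann expressions and the operators \<open>\<lambda>\<close> and \<open>\<sigma>\<close>\<close>

lemma binp_degree: "degree (binp a b) = b"
  and coeff_binp_degree: "coeff (binp a b) b = 1 / fact b"
proof -
  let ?q = "\<Prod>i<b. [: of_int a - of_nat i, 1 :] :: real poly"
  have "degree ?q = b" by (subst degree_prod_sum_eq) auto
  moreover have "lead_coeff ?q = 1" by (simp add: lead_coeff_prod)
  ultimately show "degree (binp a b) = b" "coeff (binp a b) b = 1 / fact b"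
    unfolding binp_def by simp_all
qed

lemma degree_gotz:
  assumes ne: "bs \<noteq> []" and sorted: "sorted_wrt (\<ge>) bs"
  shows "degree (gotz bs) = hd bs"
proof (rule antisym)
  let ?d = "hd bs"
  have le: "bs ! k \<le> ?d" if "k < length bs" for k
    using sorted_wrt_ge_hd[OF sorted nth_mem[OF that]] .
  show "degree (gotz bs) \<le> ?d" unfolding gotz_def
    by (rule degree_sum_le) (auto simp: binp_degree le)
  have coeff_summand: "coeff (binp (int (bs ! k) - int k) (bs ! k)) ?d
      = (if bs ! k = ?d then 1 / fact ?d else 0)" if "k < length bs" for k
    using le[OF that] coeff_binp_degree coeff_eq_0[of "binp _ (bs ! k)" ?d]
    by (auto simp: binp_degree)
  have "(1 / fact ?d :: real) \<le> (\<Sum>k<length bs. if bs ! k = ?d then 1 / fact ?d else 0)"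
    using member_le_sum[of 0 "{..<length bs}" "\<lambda>k. if bs ! k = ?d then 1 / fact ?d else 0 :: real"]
      ne by (cases bs) auto
  also have "\<dots> = coeff (gotz bs) ?d"
    unfolding gotz_def coeff_sum using coeff_summand by simp
  finally have "coeff (gotz bs) ?d \<noteq> 0"
    by (metis divide_pos_pos fact_gt_zero not_less order_refl zero_less_one)
  then show "?d \<le> degree (gotz bs)" by (rule le_degree)
qed

text \<open>The lexicographic ideal determines the Gotzmann monomial, hence the multiset of the b_j.\<close>
lemma gotzmann_expr_unique:
  assumes "gotzmann_expr P bs" and "gotzmann_expr P bs'"
  shows "bs = bs'"
proof -
  have bs: "bs \<noteq> []" "sorted_wrt (\<ge>) bs" "P = gotz bs"
    and bs': "bs' \<noteq> []" "sorted_wrt (\<ge>) bs'" "P = gotz bs'"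
    using assms by (auto simp: gotzmann_expr_def)
  define n where "n = Suc (hd bs)"
  have "hd bs = hd bs'" using degree_gotz[OF bs(1,2)] degree_gotz[OF bs'(1,2)] bs(3) bs'(3) by simp
  then have bound: "\<forall>b\<in>set bs. b < n" "\<forall>b\<in>set bs'. b < n"
    using sorted_wrt_ge_hd[OF bs(2)] sorted_wrt_ge_hd[OF bs'(2)] by (auto simp: n_def less_Suc_eq_le)
  have upsets: "lex_upset n (gotz_mon n bs) = lex_upset n (gotz_mon n bs')"
    using lex_ideal_gotz[OF bs(2) bound(1)] lex_ideal_gotz[OF bs'(2) bound(2)] bs(3) bs'(3) by simp
  have "gotz_mon n bs = gotz_mon n bs'"
  proof (rule ccontr)
    assume "gotz_mon n bs \<noteq> gotz_mon n bs'"
    moreover have "gotz_mon n bs \<in> lex_upset n (gotz_mon n bs')"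
      and "gotz_mon n bs' \<in> lex_upset n (gotz_mon n bs)"
      using upsets gotz_mon_mons by (auto simp: lex_upset_def)
    ultimately show False using lex_gt_total by (auto simp: lex_upset_def)
  qed
  then have "mset (map (\<lambda>b. n - Suc b) bs) = mset (map (\<lambda>b. n - Suc b) bs')"
    by (intro multiset_eqI) (simp only: count_mset_gotz_mon)
  moreover have "map (\<lambda>j. n - Suc j) (map (\<lambda>b. n - Suc b) xs) = xs"
    if "\<forall>b\<in>set xs. b < n" for xs
    using that by (simp, intro map_idI) auto
  ultimately have "mset bs = mset bs'" using bound by (metis mset_map)
  then have "mset (rev bs) = mset (rev bs')" by simp
  moreover have "sorted (rev bs)" "sorted (rev bs')" using bs(2) bs'(2) by (simp_all add: sorted_wrt_rev)
  ultimately show ?thesis using properties_for_sort by (metis rev_rev_ident)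
qed

lemma lambda_op_gotz: "gotzmann_expr P bs \<Longrightarrow> lambda_op P = gotz (map Suc bs)"
  using gotzmann_expr_unique by (simp add: lambda_op_def the_equality)

lemma sigma_op_gotz: "sigma_op (gotz bs) = gotz (bs @ [0])"
  unfolding sigma_op_def gotz_snoc by (simp add: binp_def)

lemma gotzmann_expr_lambda_op: "gotzmann_expr P bs \<Longrightarrow> gotzmann_expr (lambda_op P) (map Suc bs)"
  using lambda_op_gotz by (auto simp: gotzmann_expr_def sorted_wrt_map)

lemma gotzmann_expr_sigma_op: "gotzmann_expr P bs \<Longrightarrow> gotzmann_expr (sigma_op P) (bs @ [0])"
  using sigma_op_gotz by (auto simp: gotzmann_expr_def sorted_wrt_append)

lemma admissible_apply_ops: "admissible P \<Longrightarrow> admissible (apply_ops ops P)"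
proof (induction ops)
  case (Cons f fs)
  then show ?case
    by (cases f) (auto simp: admissible_def dest: gotzmann_expr_lambda_op gotzmann_expr_sigma_op)
qed simp

definition num_expandable_lex :: "nat \<Rightarrow> real poly \<Rightarrow> nat" where
  "num_expandable_lex c Q = num_expandable (c + degree Q) (lex_ideal Q (c + degree Q))"

lemma num_expandable_lex_gotz:
  assumes "c > 0" and "bs \<noteq> []" and sorted: "sorted_wrt (\<ge>) bs"
  defines "n \<equiv> c + hd bs"
  shows "num_expandable_lex c (gotz bs) = card {g. expandable n (lex_upset n (gotz_mon n bs)) g}"
proof -
  have bound: "\<forall>b\<in>set bs. b < n" using sorted_wrt_ge_hd[OF sorted] assms(1) n_def by fastforce
  show ?thesis
    unfolding num_expandable_lex_def num_expandable_def degree_gotz[OF assms(2,3)] n_def[symmetric]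
      lex_ideal_gotz[OF sorted bound] ..
qed

lemma gotz_mon_last:
  assumes "bs \<noteq> []" and "sorted_wrt (\<ge>) bs"
  shows "0 < gotz_mon n bs (n - Suc (last bs))" and "\<forall>j > n - Suc (last bs). gotz_mon n bs j = 0"
  using assms gotz_mon_pos_iff gotz_mon_eq_0[of bs "last bs" n] sorted_wrt_ge_last[OF assms(2)]
  by auto

lemma num_expandable_lex_lambda_op:
  assumes "c > 0" and P: "gotzmann_expr P bs"
  shows "num_expandable_lex c (lambda_op P) = num_expandable_lex c P"
proof -
  have bs: "bs \<noteq> []" "sorted_wrt (\<ge>) bs" "P = gotz bs" using P by (auto simp: gotzmann_expr_def)
  define n where "n = c + hd bs"
  have "num_expandable_lex c (lambda_op P)
      = card {g. expandable (Suc n) (lex_upset (Suc n) (gotz_mon n bs)) g}"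
    using num_expandable_lex_gotz[of c "map Suc bs"] gotzmann_expr_lambda_op[OF P] lambda_op_gotz[OF P]
      assms(1) bs by (simp add: gotzmann_expr_def hd_map n_def gotz_mon_map_Suc)
  also have "\<dots> = card {g. expandable n (lex_upset n (gotz_mon n bs)) g}"
    using expandable_lex_upset_Suc[of "n - Suc (last bs)" n] gotz_mon_last[OF bs(1,2)] assms(1) n_def
    by simp
  also have "\<dots> = num_expandable_lex c P"
    using num_expandable_lex_gotz[OF assms(1) bs(1,2)] bs(3) n_def by simp
  finally show ?thesis .
qed

lemma num_expandable_lex_sigma_op:
  assumes "c > 0" and P: "gotzmann_expr P bs"
  shows "num_expandable_lex c P \<le> num_expandable_lex c (sigma_op P)"
proof -
  have bs: "bs \<noteq> []" "sorted_wrt (\<ge>) bs" "P = gotz bs" using P by (auto simp: gotzmann_expr_def)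
  define n where "n = c + hd bs"
  let ?p = "gotz_mon n bs"
  have "num_expandable_lex c P = card {g. expandable n (lex_upset n ?p) g}"
    using num_expandable_lex_gotz[OF assms(1) bs(1,2)] bs(3) n_def by simp
  also have "\<dots> \<le> card {g. expandable n (lex_upset n (?p(n - 1 := Suc (?p (n - 1))))) g}"
    using card_expandable_mult_last[of "n - Suc (last bs)" n] gotz_mon_last[OF bs(1,2)] assms(1) n_def
    by simp
  also have "\<dots> = num_expandable_lex c (sigma_op P)"
    using num_expandable_lex_gotz[OF assms(1), of "bs @ [0]"] gotzmann_expr_sigma_op[OF P] bs
    by (simp add: gotzmann_expr_def sigma_op_gotz gotz_mon_snoc n_def)
  finally show ?thesis .
qed

theorem lemma7p3:
  fixes c :: nat and P :: "real poly" and \<Lambda> :: "hop list"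
  assumes "c > 0" and "admissible P"
  shows "num_expandable (c + degree (apply_ops \<Lambda> P)) (lex_ideal (apply_ops \<Lambda> P) (c + degree (apply_ops \<Lambda> P)))
         \<ge> num_expandable (c + degree P) (lex_ideal P (c + degree P))"
proof -
  have "num_expandable_lex c P \<le> num_expandable_lex c (apply_ops \<Lambda> P)"
  proof (induction \<Lambda>)
    case (Cons f fs)
    obtain bs where bs: "gotzmann_expr (apply_ops fs P) bs"
      using admissible_apply_ops[OF assms(2)] by (auto simp: admissible_def)
    show ?case
      using Cons.IH num_expandable_lex_lambda_op[OF assms(1) bs]
        num_expandable_lex_sigma_op[OF assms(1) bs] by (cases f) auto
  qed simp
  then show ?thesis unfolding num_expandable_lex_def .
qed

end
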